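(* Let $(X,d)$ be an $n$-point metric space ($n\ge2$) with aspect ratio $\alpha=\mathrm{diam}(X)/\mathrm{sep}(X)$, where $\mathrm{diam}(X)=\max_{x,y}d(x,y)$ and $\mathrm{sep}(X)=\min_{x\ne y}d(x,y)$. Then for every $0<\varepsilon<1$ and every integer $k\ge(n+\frac32)(\frac{\alpha}{\varepsilon}+\mathrm{diam}(X)+1)$, $(X,d)$ embeds with distortion at most $(1-\varepsilon)^{-1}$ into $([\mathbb{N}]^k,d^{(k)}_{\mathrm{I}})$; that is, there are $s>0$ and $f:X\to[\mathbb{N}]^k$ with $s\,d(x,y)\le d^{(k)}_{\mathrm{I}}(f(x),f(y))\le s(1-\varepsilon)^{-1}d(x,y)$ for all $x,y\in X$. In particular, for every finite metric space $X$ and every $\varepsilon>0$ there is $k\in\mathbb{N}$ such that $X$ embeds into $([\mathbb{N}]^k,d^{(k)}_{\mathrm{I}})$ (hence into $([\mathbb{N}]^{<\omega},d_{\mathrm{I}})$) with distortion at most $1+\varepsilon$.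
   Context: For $k\in\mathbb{N}$, $[\mathbb{N}]^k$ is the set of $k$-element subsets of $\mathbb{N}$ written increasingly. In Kalton's interlacing graph on $[\mathbb{N}]^k$, $A=\{a_1<\dots<a_k\}\ne B=\{b_1<\dots<b_k\}$ are adjacent iff either $a_i\le b_i\le a_{i+1}$ ($1\le i<k$) and $a_k\le b_k$, or $b_i\le a_i\le b_{i+1}$ ($1\le i<k$) and $b_k\le a_k$; $d^{(k)}_{\mathrm{I}}$ is the graph metric. $([\mathbb{N}]^{<\omega},d_{\mathrm{I}})$ is the universal interlacing graph on all finite subsets, in which additionally sets whose cardinalities differ by one are adjacent when they interlace ($\{a_1<\dots<a_{m+1}\}$ and $\{b_1<\dots<b_m\}$ with $a_i\le b_i\le a_{i+1}$), and $\emptyset$ is adjacent to all singletons; $d_{\mathrm{I}}$ restricted to $[\mathbb{N}]^k$ equals $d^{(k)}_{\mathrm{I}}$. *)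

theory Defs
  imports Complex_Main
begin

text \<open>Positive integers (the paper's natural numbers).\<close>
definition Npos :: "nat set" where
  "Npos = {n. 1 \<le> n}"

definition kSets :: "nat \<Rightarrow> nat set set" where
  "kSets k = {A. A \<subseteq> Npos \<and> finite A \<and> card A = k}"

definition interl :: "nat \<Rightarrow> nat set \<Rightarrow> nat set \<Rightarrow> bool" where
  "interl k A B =
    (let a = sorted_list_of_set A; b = sorted_list_of_set B in
      (\<forall>i. i + 1 < k \<longrightarrow> a ! i \<le> b ! i \<and> b ! i \<le> a ! (i + 1)) \<and>
      a ! (k - 1) \<le> b ! (k - 1))"

definition adjI :: "nat \<Rightarrow> nat set \<Rightarrow> nat set \<Rightarrow> bool" where
  "adjI k A B = (A \<in> kSets k \<and> B \<in> kSets k \<and> A \<noteq> B \<and> (interl k A B \<or> interl k B A))"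

inductive walkI :: "nat \<Rightarrow> nat \<Rightarrow> nat set \<Rightarrow> nat set \<Rightarrow> bool" for k where
  refl: "A \<in> kSets k \<Longrightarrow> walkI k 0 A A"
| step: "adjI k A B \<Longrightarrow> walkI k n B C \<Longrightarrow> walkI k (Suc n) A C"

text \<open>The graph metric d_I^(k) (the graph is connected, so LEAST is attained).\<close>
definition dI :: "nat \<Rightarrow> nat set \<Rightarrow> nat set \<Rightarrow> nat" where
  "dI k A B = (LEAST n. walkI k n A B)"

definition is_metric_on :: "'a set \<Rightarrow> ('a \<Rightarrow> 'a \<Rightarrow> real) \<Rightarrow> bool" where
  "is_metric_on X d =
    ((\<forall>x\<in>X. \<forall>y\<in>X. 0 \<le> d x y \<and> (d x y = 0 \<longleftrightarrow> x = y) \<and> d x y = d y x) \<and>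
     (\<forall>x\<in>X. \<forall>y\<in>X. \<forall>z\<in>X. d x z \<le> d x y + d y z))"

definition diam :: "'a set \<Rightarrow> ('a \<Rightarrow> 'a \<Rightarrow> real) \<Rightarrow> real" where
  "diam X d = Max {d x y | x y. x \<in> X \<and> y \<in> X}"

definition sep :: "'a set \<Rightarrow> ('a \<Rightarrow> 'a \<Rightarrow> real) \<Rightarrow> real" where
  "sep X d = Min {d x y | x y. x \<in> X \<and> y \<in> X \<and> x \<noteq> y}"

end

theory Submission
  imports Defs
begin

text \<open>A set \<open>A \<in> [\<nat>]\<^sup>k\<close> is determined by its counting function \<open>t \<mapsto> |A \<inter> [1, t]|\<close>, a
  lattice path from \<open>0\<close> to \<open>k\<close> with unit steps, and \<open>A\<close> interlaces \<open>B\<close> exactly when one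
  count exceeds the other by \<open>0\<close> or \<open>1\<close> everywhere. Hence a walk of length \<open>m\<close> changes any
  difference of counts at two points by at most \<open>m\<close>, while two lattice paths at uniform
  distance \<open>P\<close> are joined by a walk of length at most \<open>2P\<close> (lower each to their pointwise
  minimum one unit at a time).

  Enumerate \<open>X = {p\<^sub>1, \<dots>, p\<^sub>n}\<close> and encode \<open>x\<close> by the path through the heights
  \<open>iV + \<lceil>c d(x, p\<^sub>i)\<rceil>\<close> at the ends of \<open>n\<close> consecutive blocks. Comparing \<open>x\<close> and \<open>y\<close> at the
  blocks of \<open>p = x\<close> and \<open>p = y\<close> and using the triangle inequality elsewhere gives
  \<open>d\<^sub>I(f x, f y) = 2\<lceil>c d(x, y)\<rceil>\<close> exactly. With \<open>c = 1/(\<epsilon> sep X)\<close> every nonzero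
  \<open>c d(x, y)\<close> is at least \<open>1/\<epsilon>\<close>, so rounding up costs a factor at most \<open>(1 - \<epsilon>)\<^sup>-\<^sup>1\<close>;
  the bound on \<open>k\<close> leaves room for the \<open>n + 1\<close> blocks of height \<open>\<lceil>c diam X\<rceil>\<close>.\<close>

definition count_upto :: "nat set \<Rightarrow> nat \<Rightarrow> nat" where
  "count_upto A t = card {a\<in>A. a \<le> t}"

lemma sorted_wrt_nth_le_iff:
  assumes "sorted_wrt (<) xs" "i < length xs"
  shows "xs ! i \<le> t \<longleftrightarrow> i < length (filter (\<lambda>x. x \<le> (t::nat)) xs)"
  using assms
proof (induction xs arbitrary: i)
  case Nil
  then show ?case by simp
next
  case (Cons x ys)
  show ?case
  proof (cases "x \<le> t")
    case True
    then show ?thesis using Cons by (cases i) auto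
  next
    case False
    then have "filter (\<lambda>x. x \<le> t) ys = []"
      using Cons.prems(1) by (auto simp: filter_empty_conv)
    moreover have "x \<le> (x # ys) ! i"
      using Cons.prems by (cases i) (auto simp: less_imp_le)
    ultimately show ?thesis using False by auto
  qed
qed

lemma count_upto_le: "A \<in> kSets k \<Longrightarrow> count_upto A t \<le> k"
  unfolding count_upto_def kSets_def by (auto intro!: card_mono[of A, THEN le_trans])

lemma kSets_nth_le_iff:
  assumes "A \<in> kSets k" "i < k"
  shows "sorted_list_of_set A ! i \<le> t \<longleftrightarrow> i < count_upto A t"
proof -
  let ?a = "sorted_list_of_set A"
  have "finite A" "length ?a = k" using assms(1) by (auto simp: kSets_def)
  moreover have "length (filter (\<lambda>x. x \<le> t) ?a) = count_upto A t"
    using distinct_length_filter[of ?a "\<lambda>x. x \<le> t"] \<open>finite A\<close>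
    by (simp add: count_upto_def Collect_conj_eq Int_commute)
  ultimately show ?thesis using sorted_wrt_nth_le_iff[of ?a i t] assms(2) by simp
qed

lemma kSets_nth_le_nth_iff:
  assumes A: "A \<in> kSets k" and B: "B \<in> kSets k"
  shows "(\<forall>i. i + j < k \<longrightarrow> sorted_list_of_set B ! i \<le> sorted_list_of_set A ! (i + j)) \<longleftrightarrow>
    (\<forall>t. count_upto A t \<le> count_upto B t + j)"
proof
  assume le: "\<forall>i. i + j < k \<longrightarrow> sorted_list_of_set B ! i \<le> sorted_list_of_set A ! (i + j)"
  show "\<forall>t. count_upto A t \<le> count_upto B t + j"
  proof (rule ccontr)
    assume "\<not> ?thesis"
    then obtain t where lt: "count_upto B t + j < count_upto A t" by (auto simp: not_le)
    then have ik: "count_upto B t + j < k" using count_upto_le[OF A, of t] by simp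
    have "sorted_list_of_set A ! (count_upto B t + j) \<le> t" using kSets_nth_le_iff[OF A ik] lt by simp
    then have "sorted_list_of_set B ! count_upto B t \<le> t" using le ik order_trans by blast
    then show False using kSets_nth_le_iff[OF B, of "count_upto B t" t] ik by simp
  qed
next
  assume count: "\<forall>t. count_upto A t \<le> count_upto B t + j"
  show "\<forall>i. i + j < k \<longrightarrow> sorted_list_of_set B ! i \<le> sorted_list_of_set A ! (i + j)"
  proof (intro allI impI)
    fix i assume ik: "i + j < k"
    let ?t = "sorted_list_of_set A ! (i + j)"
    have "i + j < count_upto A ?t" using kSets_nth_le_iff[OF A ik, of ?t] by simp
    then have "i < count_upto B ?t" using count by (meson add_less_cancel_right order_less_le_trans)
    then show "sorted_list_of_set B ! i \<le> ?t" using kSets_nth_le_iff[OF B, of i] ik by simp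
  qed
qed

lemma interl_iff_count_upto:
  assumes A: "A \<in> kSets k" and B: "B \<in> kSets k" and "0 < k"
  shows "interl k A B \<longleftrightarrow>
    (\<forall>t. count_upto B t \<le> count_upto A t \<and> count_upto A t \<le> count_upto B t + 1)"
proof -
  let ?a = "sorted_list_of_set A" and ?b = "sorted_list_of_set B"
  have "{i. i < k} = {i. i + 1 < k} \<union> {k - 1}" using \<open>0 < k\<close> by auto
  then have "interl k A B \<longleftrightarrow>
      (\<forall>i<k. ?a ! i \<le> ?b ! i) \<and> (\<forall>i. i + 1 < k \<longrightarrow> ?b ! i \<le> ?a ! (i + 1))"
    unfolding interl_def Let_def by blast
  then show ?thesis
    using kSets_nth_le_nth_iff[OF B A, of 0] kSets_nth_le_nth_iff[OF A B, of 1] by auto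
qed

lemma walkI_append: "walkI k n A B \<Longrightarrow> walkI k m B C \<Longrightarrow> walkI k (n + m) A C"
  by (induction rule: walkI.induct) (auto intro: walkI.step)

lemma walkI_sym: "walkI k n A B \<Longrightarrow> walkI k n B A"
proof (induction rule: walkI.induct)
  case (refl A)
  then show ?case by (rule walkI.refl)
next
  case (step A B n C)
  then have "adjI k B A" "A \<in> kSets k" by (auto simp: adjI_def)
  then have "walkI k 1 B A" by (auto intro: walkI.intros)
  from walkI_append[OF step.IH this] show ?case by simp
qed

text \<open>Along an edge each count changes by at most one, and all in the same direction, so a
  difference of counts at two points changes by at most one per step.\<close>

lemma walkI_count_upto_diff_le:
  assumes "walkI k n A B" "0 < k"
  shows "\<bar>(int (count_upto B t2) - count_upto B t1) - (int (count_upto A t2) - count_upto A t1)\<bar> \<le> n"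
  using assms
proof (induction rule: walkI.induct)
  case (refl A)
  then show ?case by simp
next
  case (step A B n C)
  have AB: "A \<in> kSets k" "B \<in> kSets k" and "interl k A B \<or> interl k B A"
    using step.hyps(1) unfolding adjI_def by auto
  then consider "\<forall>t. count_upto B t \<le> count_upto A t \<and> count_upto A t \<le> count_upto B t + 1"
    | "\<forall>t. count_upto A t \<le> count_upto B t \<and> count_upto B t \<le> count_upto A t + 1"
    using interl_iff_count_upto[OF _ _ step.prems] by blast
  then have "\<bar>(int (count_upto B t2) - count_upto B t1) - (int (count_upto A t2) - count_upto A t1)\<bar> \<le> 1"
    by cases (smt (verit) of_nat_1 of_nat_add of_nat_mono)+
  then show ?case using step.IH step.prems by simp
qed

lemma dI_le: "walkI k m A B \<Longrightarrow> dI k A B \<le> m"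
  unfolding dI_def by (rule Least_le)

lemma walkI_dI: "walkI k m A B \<Longrightarrow> walkI k (dI k A B) A B"
  unfolding dI_def by (rule LeastI)

definition lattice_path :: "nat \<Rightarrow> (nat \<Rightarrow> nat) \<Rightarrow> bool" where
  "lattice_path k G \<longleftrightarrow>
     G 0 = 0 \<and> (\<forall>t. G t \<le> G (Suc t) \<and> G (Suc t) \<le> Suc (G t)) \<and> (\<exists>T. \<forall>t\<ge>T. G t = k)"

definition jumps :: "(nat \<Rightarrow> nat) \<Rightarrow> nat set" where
  "jumps G = {Suc t | t. G (Suc t) = Suc (G t)}"

lemma count_upto_jumps:
  assumes "lattice_path k G"
  shows "count_upto (jumps G) t = G t"
proof (induction t)
  case 0
  have "{a \<in> jumps G. a \<le> 0} = {}" by (auto simp: jumps_def)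
  then show ?case using assms by (simp add: count_upto_def lattice_path_def)
next
  case (Suc t)
  have "{a \<in> jumps G. a \<le> Suc t} =
      {a \<in> jumps G. a \<le> t} \<union> (if G (Suc t) = Suc (G t) then {Suc t} else {})"
    by (auto simp: jumps_def le_Suc_eq)
  moreover have "finite {a \<in> jumps G. a \<le> t}" by (rule finite_subset[of _ "{..t}"]) auto
  moreover have "G (Suc t) = G t \<or> G (Suc t) = Suc (G t)"
    using assms unfolding lattice_path_def by (metis le_SucE le_antisym)
  ultimately show ?case using Suc.IH by (auto simp: count_upto_def)
qed

lemma jumps_kSets:
  assumes "lattice_path k G"
  shows "jumps G \<in> kSets k"
proof -
  obtain T where T: "\<forall>t\<ge>T. G t = k" using assms unfolding lattice_path_def by blast
  have "jumps G \<subseteq> {..T}"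
  proof
    fix a assume "a \<in> jumps G"
    then obtain t where a: "a = Suc t" "G (Suc t) = Suc (G t)" by (auto simp: jumps_def)
    then have "t < T" using T by (metis Suc_n_not_n le_Suc_eq not_le)
    then show "a \<in> {..T}" using a by simp
  qed
  then have "finite (jumps G)" "{a \<in> jumps G. a \<le> T} = jumps G"
    by (auto intro: finite_subset)
  moreover have "count_upto (jumps G) T = k" using count_upto_jumps[OF assms] T by simp
  moreover have "jumps G \<subseteq> Npos" by (auto simp: jumps_def Npos_def)
  ultimately show ?thesis by (simp add: kSets_def count_upto_def)
qed

lemma jumps_inj:
  assumes "lattice_path k G" "lattice_path k H" "jumps G = jumps H"
  shows "G = H"
  using count_upto_jumps[OF assms(1)] count_upto_jumps[OF assms(2)] assms(3) by auto

lemma adjI_jumps: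
  assumes G: "lattice_path k G" and H: "lattice_path k H" and "0 < k" "G \<noteq> H"
    and "\<forall>t. H t \<le> G t \<and> G t \<le> H t + 1"
  shows "adjI k (jumps G) (jumps H)"
proof -
  have "jumps G \<in> kSets k" "jumps H \<in> kSets k" using G H by (auto intro: jumps_kSets)
  moreover have "interl k (jumps G) (jumps H)"
    using assms interl_iff_count_upto[OF calculation \<open>0 < k\<close>]
    by (simp add: count_upto_jumps[OF G] count_upto_jumps[OF H])
  moreover have "jumps G \<noteq> jumps H" using jumps_inj[OF G H] \<open>G \<noteq> H\<close> by blast
  ultimately show ?thesis by (simp add: adjI_def)
qed

lemma lattice_path_combine:
  assumes G: "lattice_path k G" and H: "lattice_path k H"
    and mono: "\<And>a a' b b'. a \<le> a' \<Longrightarrow> b \<le> b' \<Longrightarrow> \<phi> a b \<le> \<phi> a' b'"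
    and step: "\<And>a b. \<phi> (Suc a) (Suc b) \<le> Suc (\<phi> a b)"
    and "\<phi> 0 0 = 0" "\<phi> k k = k"
  shows "lattice_path k (\<lambda>t. \<phi> (G t) (H t))"
proof -
  obtain T1 T2 where "\<forall>t\<ge>T1. G t = k" "\<forall>t\<ge>T2. H t = k"
    using G H unfolding lattice_path_def by blast
  then have "\<forall>t\<ge>max T1 T2. \<phi> (G t) (H t) = k" using \<open>\<phi> k k = k\<close> by auto
  moreover have "\<phi> (G t) (H t) \<le> \<phi> (G (Suc t)) (H (Suc t)) \<and>
      \<phi> (G (Suc t)) (H (Suc t)) \<le> Suc (\<phi> (G t) (H t))" for t
  proof -
    have "G t \<le> G (Suc t)" "G (Suc t) \<le> Suc (G t)" "H t \<le> H (Suc t)" "H (Suc t) \<le> Suc (H t)"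
      using G H unfolding lattice_path_def by blast+
    then show ?thesis using mono step order_trans by meson
  qed
  moreover have "\<phi> (G 0) (H 0) = 0" using G H \<open>\<phi> 0 0 = 0\<close> by (simp add: lattice_path_def)
  ultimately show ?thesis unfolding lattice_path_def by blast
qed

text \<open>Lowering \<open>G\<close> by one wherever it lies above \<open>H\<close> is a single edge of the graph.\<close>

lemma walkI_jumps_descent:
  assumes "0 < k"
  shows "lattice_path k G \<Longrightarrow> lattice_path k H \<Longrightarrow> \<forall>t. H t \<le> G t \<and> G t \<le> H t + P \<Longrightarrow>
    \<exists>m\<le>P. walkI k m (jumps G) (jumps H)"
proof (induction P arbitrary: G)
  case 0
  then have "G = H" by (simp add: le_antisym ext)
  then show ?case using jumps_kSets[OF "0.prems"(1)] walkI.refl by auto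
next
  case (Suc P)
  define G' where "G' = (\<lambda>t. max (G t - 1) (H t))"
  have G': "lattice_path k G'"
    unfolding G'_def by (rule lattice_path_combine[OF Suc.prems(1,2)]) auto
  have "\<forall>t. H t \<le> G' t \<and> G' t \<le> H t + P"
  proof
    fix t show "H t \<le> G' t \<and> G' t \<le> H t + P" using spec[OF Suc.prems(3), of t] by (auto simp: G'_def)
  qed
  then obtain m where m: "m \<le> P" "walkI k m (jumps G') (jumps H)"
    using Suc.IH[OF G' Suc.prems(2)] by blast
  show ?case
  proof (cases "G = G'")
    case True
    then show ?thesis using m by (intro exI[of _ m]) auto
  next
    case False
    have "\<forall>t. G' t \<le> G t \<and> G t \<le> G' t + 1" using Suc.prems(3) by (auto simp: G'_def)
    then have "adjI k (jumps G) (jumps G')" using adjI_jumps[OF Suc.prems(1) G' assms False] by blast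
    then show ?thesis using m walkI.step by (intro exI[of _ "Suc m"]) auto
  qed
qed

lemma walkI_jumps:
  assumes "0 < k" and G: "lattice_path k G" and H: "lattice_path k H"
    and "\<forall>t. G t \<le> H t + P" "\<forall>t. H t \<le> G t + P"
  shows "\<exists>m\<le>2 * P. walkI k m (jumps G) (jumps H)"
proof -
  define M where "M = (\<lambda>t. min (G t) (H t))"
  have M: "lattice_path k M" unfolding M_def by (rule lattice_path_combine[OF G H]) auto
  have "\<forall>t. M t \<le> G t \<and> G t \<le> M t + P" "\<forall>t. M t \<le> H t \<and> H t \<le> M t + P"
    using assms(4,5) by (auto simp: M_def min_def)
  then obtain m1 m2 where m1: "m1 \<le> P" "walkI k m1 (jumps G) (jumps M)"
    and m2: "m2 \<le> P" "walkI k m2 (jumps H) (jumps M)"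
    using walkI_jumps_descent[OF \<open>0 < k\<close> _ M] G H by meson
  have "walkI k (m1 + m2) (jumps G) (jumps H)" using walkI_append[OF m1(2) walkI_sym[OF m2(2)]] .
  then show ?thesis using m1(1) m2(1) by (intro exI[of _ "m1 + m2"]) auto
qed

text \<open>\<open>ramp k H\<close> takes the value \<open>H i\<close> at \<open>i * (k + 1)\<close> and climbs in unit steps in
  between; blocks of length \<open>k + 1\<close> suffice because a monotone \<open>H\<close> bounded by \<open>k\<close> never
  rises by more than \<open>k\<close> from one block to the next.\<close>

definition ramp :: "nat \<Rightarrow> (nat \<Rightarrow> nat) \<Rightarrow> nat \<Rightarrow> nat" where
  "ramp k H t = min (H (t div Suc k) + t mod Suc k) (H (t div Suc k + 1))"

lemma ramp_mult: "ramp k H (i * Suc k) = min (H i) (H (i + 1))"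
proof -
  have "i * Suc k div Suc k = i" by (rule nonzero_mult_div_cancel_right) simp
  moreover have "i * Suc k mod Suc k = 0" by (rule mod_mult_self2_is_0)
  ultimately show ?thesis unfolding ramp_def by simp
qed

lemma ramp_le_ramp_add:
  assumes "\<forall>i. H1 i \<le> H2 i + P"
  shows "ramp k H1 t \<le> ramp k H2 t + P"
  using assms[rule_format, of "t div Suc k"] assms[rule_format, of "t div Suc k + 1"]
  by (simp add: ramp_def min_def)

lemma lattice_path_ramp:
  assumes mono: "\<forall>i. H i \<le> H (Suc i)" and bound: "\<forall>i. H i \<le> k" and "H 0 = 0"
    and ev: "\<forall>i\<ge>N. H i = k"
  shows "lattice_path k (ramp k H)"
proof -
  have "ramp k H t \<le> ramp k H (Suc t) \<and> ramp k H (Suc t) \<le> Suc (ramp k H t)" for t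
  proof (cases "t mod Suc k = k")
    case True
    then have a: "Suc t div Suc k = t div Suc k + 1" "Suc t mod Suc k = 0"
      using div_Suc[of t "Suc k"] mod_Suc[of t "Suc k"] by auto
    have "ramp k H t = H (t div Suc k + 1)"
      unfolding ramp_def using True bound by (simp add: min_absorb2 trans_le_add2)
    moreover have "ramp k H (Suc t) = H (t div Suc k + 1)"
      unfolding ramp_def a using mono by (simp add: min_absorb1)
    ultimately show ?thesis by simp
  next
    case False
    then have "Suc t div Suc k = t div Suc k" "Suc t mod Suc k = Suc (t mod Suc k)"
      using div_Suc[of t "Suc k"] mod_Suc[of t "Suc k"] mod_less_divisor[of "Suc k" t] by auto
    then show ?thesis unfolding ramp_def by (simp add: min_def)
  qed
  moreover have "\<forall>t\<ge>N * Suc k. ramp k H t = k"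
  proof (intro allI impI)
    fix t assume "N * Suc k \<le> t"
    then have "N \<le> t div Suc k" by (simp add: less_eq_div_iff_mult_less_eq)
    then show "ramp k H t = k" unfolding ramp_def using ev by simp
  qed
  ultimately show ?thesis using \<open>H 0 = 0\<close> by (simp add: lattice_path_def ramp_def) blast
qed

text \<open>The base \<open>i * V\<close> keeps the staircase monotone whatever the entries \<open>u i \<in> [0, V]\<close>,
  and \<open>(n + 1) * V \<le> k\<close> leaves room for it below \<open>k\<close>.\<close>

definition staircase :: "nat \<Rightarrow> nat \<Rightarrow> nat \<Rightarrow> (nat \<Rightarrow> nat) \<Rightarrow> nat \<Rightarrow> nat" where
  "staircase k n V u i = (if i = 0 then 0 else if i \<le> n then i * V + u (i - 1) else k)"

definition stair_set :: "nat \<Rightarrow> nat \<Rightarrow> nat \<Rightarrow> (nat \<Rightarrow> nat) \<Rightarrow> nat set" where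
  "stair_set k n V u = jumps (ramp k (staircase k n V u))"

locale staircase_bounds =
  fixes k n V :: nat
  assumes room: "(n + 1) * V \<le> k" and k_pos: "0 < k"
begin

context
  fixes u :: "nat \<Rightarrow> nat"
  assumes u_le: "\<forall>i<n. u i \<le> V"
begin

lemma staircase_le_next: "staircase k n V u i \<le> staircase k n V u (Suc i)"
proof -
  consider "i = 0" | "0 < i" "i < n" | "i = n" "0 < n" | "n < i" by linarith
  then show ?thesis
  proof cases
    case 2
    then have "i * V + u (i - 1) \<le> Suc i * V" using u_le by simp
    then show ?thesis using 2 by (simp add: staircase_def)
  next
    case 3
    then have "i * V + u (i - 1) \<le> (n + 1) * V" using u_le by simp
    then show ?thesis using 3 room by (simp add: staircase_def)
  qed (auto simp: staircase_def)
qed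

lemma staircase_le: "staircase k n V u i \<le> k"
proof -
  have "i * V + u (i - 1) \<le> n * V + V" if "0 < i" "i \<le> n"
    using that u_le by (intro add_le_mono) simp_all
  then show ?thesis using room by (auto simp: staircase_def)
qed

lemma lattice_path_stair: "lattice_path k (ramp k (staircase k n V u))"
  by (rule lattice_path_ramp[of _ _ "Suc n"])
    (auto simp: staircase_le_next staircase_le, auto simp: staircase_def)

lemma stair_set_kSets: "stair_set k n V u \<in> kSets k"
  unfolding stair_set_def by (rule jumps_kSets[OF lattice_path_stair])

lemma count_upto_stair_set: "count_upto (stair_set k n V u) (i * Suc k) = staircase k n V u i"
  unfolding stair_set_def count_upto_jumps[OF lattice_path_stair] ramp_mult
  using staircase_le_next by (simp add: min_absorb1)

end

lemma walkI_stair_set: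
  assumes u: "\<forall>i<n. u i \<le> V" and w: "\<forall>i<n. w i \<le> V"
    and close: "\<forall>i<n. u i \<le> w i + P \<and> w i \<le> u i + P"
  shows "\<exists>m\<le>2 * P. walkI k m (stair_set k n V u) (stair_set k n V w)"
proof -
  have "\<forall>i. staircase k n V u i \<le> staircase k n V w i + P"
       "\<forall>i. staircase k n V w i \<le> staircase k n V u i + P"
    using close by (auto simp: staircase_def)
  then have "\<forall>t. ramp k (staircase k n V u) t \<le> ramp k (staircase k n V w) t + P"
       "\<forall>t. ramp k (staircase k n V w) t \<le> ramp k (staircase k n V u) t + P"
    by (simp_all add: ramp_le_ramp_add)
  then show ?thesis
    unfolding stair_set_def by (rule walkI_jumps[OF k_pos lattice_path_stair[OF u] lattice_path_stair[OF w]])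
qed

lemma dI_stair_set_le:
  assumes "\<forall>i<n. u i \<le> V" "\<forall>i<n. w i \<le> V" "\<forall>i<n. u i \<le> w i + P \<and> w i \<le> u i + P"
  shows "dI k (stair_set k n V u) (stair_set k n V w) \<le> 2 * P"
  using walkI_stair_set[OF assms] dI_le order_trans by blast

text \<open>The counts at the starts of blocks \<open>a + 1\<close> and \<open>b + 1\<close> differ by the block heights,
  so two coordinates moving in opposite directions both contribute to the distance.\<close>

lemma dI_stair_set_ge:
  assumes "\<forall>i<n. u i \<le> V" "\<forall>i<n. w i \<le> V" and "a < n" "b < n"
  shows "(int (w a) - u a) + (int (u b) - w b) \<le> dI k (stair_set k n V u) (stair_set k n V w)"
proof -
  let ?A = "stair_set k n V u" and ?B = "stair_set k n V w"
  have "\<forall>i<n. u i \<le> w i + V \<and> w i \<le> u i + V" using assms(1,2) by (simp add: trans_le_add2)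
  then obtain m where "walkI k m ?A ?B" using walkI_stair_set[OF assms(1,2)] by blast
  then have walk: "walkI k (dI k ?A ?B) ?A ?B" by (rule walkI_dI)
  have "count_upto ?A (Suc i * Suc k) = Suc i * V + u i"
    "count_upto ?B (Suc i * Suc k) = Suc i * V + w i" if "i < n" for i
    unfolding count_upto_stair_set[OF assms(1)] count_upto_stair_set[OF assms(2)]
    using that by (simp_all add: staircase_def)
  with walkI_count_upto_diff_le[OF walk k_pos, of "Suc a * Suc k" "Suc b * Suc k"] assms(3,4)
  show ?thesis by simp
qed

end

lemma dist_le_diam:
  assumes "finite X" "x \<in> X" "y \<in> X"
  shows "d x y \<le> diam X d"
proof -
  have "{d x y | x y. x \<in> X \<and> y \<in> X} = (\<lambda>(x, y). d x y) ` (X \<times> X)" by auto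
  then show ?thesis unfolding diam_def using assms by (intro Max_ge) auto
qed

lemma diam_nonneg:
  assumes "finite X" "is_metric_on X d" "X \<noteq> {}"
  shows "0 \<le> diam X d"
proof -
  obtain x where "x \<in> X" using assms(3) by blast
  then show ?thesis
    using dist_le_diam[OF assms(1), of x x d] assms(2) unfolding is_metric_on_def by fastforce
qed

lemma finite_sep_set: "finite X \<Longrightarrow> finite {d x y | x y. x \<in> X \<and> y \<in> X \<and> x \<noteq> y}"
  by (rule finite_subset[of _ "(\<lambda>(x, y). d x y) ` (X \<times> X)"]) auto

lemma sep_le_dist:
  assumes "finite X" "x \<in> X" "y \<in> X" "x \<noteq> y"
  shows "sep X d \<le> d x y"
  unfolding sep_def using finite_sep_set[OF assms(1)] assms(2-4) by (intro Min_le) auto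

lemma dist_eq_0_or_sep_le:
  assumes "finite X" "is_metric_on X d" "x \<in> X" "y \<in> X"
  shows "d x y = 0 \<or> sep X d \<le> d x y"
  using sep_le_dist[OF assms(1,3,4)] assms(2-4) unfolding is_metric_on_def by blast

lemma sep_pos:
  assumes "finite X" "is_metric_on X d" "2 \<le> card X"
  shows "0 < sep X d"
proof -
  let ?S = "{d x y | x y. x \<in> X \<and> y \<in> X \<and> x \<noteq> y}"
  have "finite ?S" using finite_sep_set[OF assms(1)] .
  moreover have "\<not> card X \<le> Suc 0" using assms(3) by simp
  then obtain x y where "x \<in> X" "y \<in> X" "x \<noteq> y" using card_le_Suc0_iff_eq[OF assms(1)] by blast
  then have "?S \<noteq> {}" by blast
  ultimately have "sep X d \<in> ?S" unfolding sep_def by (rule Min_in)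
  then obtain x y where "x \<in> X" "y \<in> X" "x \<noteq> y" "sep X d = d x y" by blast
  then show ?thesis using assms(2) unfolding is_metric_on_def by (metis order_le_less)
qed

lemma nat_ceiling_le_add:
  assumes "0 \<le> a" "0 \<le> b" "c \<le> a + b"
  shows "nat \<lceil>c\<rceil> \<le> nat \<lceil>a\<rceil> + nat \<lceil>b\<rceil>"
proof -
  have "\<lceil>c\<rceil> \<le> \<lceil>a\<rceil> + \<lceil>b\<rceil>" using ceiling_mono[OF assms(3)] ceiling_add_le order_trans by blast
  then show ?thesis using assms(1,2) by linarith
qed

text \<open>A Frechet-type embedding: \<open>x\<close> is encoded by the rounded distances \<open>\<lceil>c * d x p\<rceil>\<close> to
  all points \<open>p\<close>. The triangle inequality gives the upper bound; the coordinates \<open>p = x\<close> and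
  \<open>p = y\<close> move in opposite directions and give the lower bound.\<close>

lemma interlacing_embedding_ceiling:
  fixes X :: "'a set" and d :: "'a \<Rightarrow> 'a \<Rightarrow> real"
  assumes metric: "is_metric_on X d" and "finite X" and "0 < c"
    and V: "\<forall>x\<in>X. \<forall>y\<in>X. c * d x y \<le> real V" and "(card X + 1) * V \<le> k" and "0 < k"
  shows "\<exists>f. f ` X \<subseteq> kSets k \<and> (\<forall>x\<in>X. \<forall>y\<in>X. dI k (f x) (f y) = 2 * nat \<lceil>c * d x y\<rceil>)"
proof -
  let ?n = "card X"
  interpret staircase_bounds k ?n V using assms by unfold_locales
  have d: "\<And>x y. x \<in> X \<Longrightarrow> y \<in> X \<Longrightarrow> 0 \<le> d x y \<and> (d x y = 0 \<longleftrightarrow> x = y) \<and> d x y = d y x"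
    and tri: "\<And>x y z. x \<in> X \<Longrightarrow> y \<in> X \<Longrightarrow> z \<in> X \<Longrightarrow> d x z \<le> d x y + d y z"
    using metric unfolding is_metric_on_def by blast+
  obtain ps where ps: "set ps = X" "distinct ps" using finite_distinct_list[OF \<open>finite X\<close>] by blast
  then have len: "length ps = ?n" by (metis distinct_card)
  define u where "u x i = nat \<lceil>c * d x (ps ! i)\<rceil>" for x i
  define f where "f x = stair_set k ?n V (u x)" for x
  have ps_X: "ps ! i \<in> X" if "i < ?n" for i using that ps len by auto
  have u_le: "\<forall>i<?n. u x i \<le> V" if "x \<in> X" for x
    using V that ps_X by (auto simp: u_def ceiling_le_iff nat_le_iff)
  have u_close: "u x i \<le> u y i + nat \<lceil>c * d x y\<rceil>" if "x \<in> X" "y \<in> X" "i < ?n" for x y i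
  proof -
    have p: "ps ! i \<in> X" using ps_X[OF that(3)] .
    have "c * d x (ps ! i) \<le> c * (d x y + d y (ps ! i))"
      using tri[OF that(1,2) p] \<open>0 < c\<close> by (simp add: mult_left_mono)
    then show ?thesis unfolding u_def add.commute[of "nat \<lceil>c * d y (ps ! i)\<rceil>"]
      using d[OF that(1,2)] d[OF that(2) p] \<open>0 < c\<close> by (intro nat_ceiling_le_add) (auto simp: distrib_left)
  qed
  have "dI k (f x) (f y) = 2 * nat \<lceil>c * d x y\<rceil>" if x: "x \<in> X" and y: "y \<in> X" for x y
  proof -
    define P where "P = nat \<lceil>c * d x y\<rceil>"
    have "dI k (f x) (f y) \<le> 2 * P"
      unfolding f_def P_def using u_le[OF x] u_le[OF y] u_close[OF x y] u_close[OF y x] d[OF x y]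
      by (intro dI_stair_set_le) auto
    moreover obtain a b where "a < ?n" "ps ! a = x" "b < ?n" "ps ! b = y"
      using x y ps len by (metis in_set_conv_nth)
    then have "u x a = 0" "u y b = 0" "u y a = P" "u x b = P"
      using d[OF x x] d[OF y y] d[OF x y] by (auto simp: u_def P_def)
    then have "2 * P \<le> dI k (f x) (f y)"
      using dI_stair_set_ge[OF u_le[OF x] u_le[OF y] \<open>a < ?n\<close> \<open>b < ?n\<close>] unfolding f_def by simp
    ultimately show ?thesis unfolding P_def by simp
  qed
  moreover have "f ` X \<subseteq> kSets k" using stair_set_kSets u_le unfolding f_def by blast
  ultimately show ?thesis by blast
qed

lemma nat_ceiling_distortion:
  fixes r \<epsilon> :: real
  assumes "0 < \<epsilon>" "\<epsilon> < 1" "r = 0 \<or> 1 \<le> \<epsilon> * r"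
  shows "r \<le> real (nat \<lceil>r\<rceil>)" "real (nat \<lceil>r\<rceil>) \<le> r / (1 - \<epsilon>)"
proof -
  show "r \<le> real (nat \<lceil>r\<rceil>)" by linarith
  show "real (nat \<lceil>r\<rceil>) \<le> r / (1 - \<epsilon>)"
  proof (cases "r = 0")
    case False
    then have "1 \<le> \<epsilon> * r" using assms(3) by simp
    then have "0 \<le> r" using assms(1) mult_pos_neg[of \<epsilon> r] by linarith
    have "real (nat \<lceil>r\<rceil>) * (1 - \<epsilon>) \<le> (r + 1) * (1 - \<epsilon>)"
      using \<open>0 \<le> r\<close> assms(2) by (intro mult_right_mono) linarith+
    also have "\<dots> \<le> r" using \<open>1 \<le> \<epsilon> * r\<close> assms(1) by (simp add: algebra_simps)
    finally show ?thesis using assms(2) by (simp add: pos_le_divide_eq)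
  qed simp
qed

lemma mult_nat_ceiling_le:
  fixes r D :: real
  assumes "0 \<le> r" "0 \<le> D" "(real n + 3/2) * (r + D + 1) \<le> real k"
  shows "(n + 1) * nat \<lceil>r\<rceil> \<le> k" "0 < k"
proof -
  have "real (nat \<lceil>r\<rceil>) \<le> r + 1" using assms(1) by linarith
  then have "real ((n + 1) * nat \<lceil>r\<rceil>) \<le> (real n + 1) * (r + 1)"
    unfolding of_nat_mult of_nat_add of_nat_1 by (rule mult_left_mono) simp_all
  also have "\<dots> \<le> (real n + 3/2) * (r + D + 1)" using assms(1,2) by (intro mult_mono) auto
  finally show "(n + 1) * nat \<lceil>r\<rceil> \<le> k" using assms(3) by linarith
  have "(1::real) \<le> (real n + 3/2) * (r + D + 1)"
    using assms(1,2) mult_mono[of 1 "real n + 3/2" 1 "r + D + 1"] by simp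
  then have "(1::real) \<le> real k" using assms(3) by linarith
  then show "0 < k" by simp
qed

theorem theorem5p3:
  fixes X :: "'a set" and d :: "'a \<Rightarrow> 'a \<Rightarrow> real" and n k :: nat and \<epsilon> :: real
  assumes "finite X" and "card X = n" and "n \<ge> 2"
    and "is_metric_on X d"
    and "0 < \<epsilon>" and "\<epsilon> < 1"
    and "real k \<ge> (real n + 3/2) * ((diam X d / sep X d) / \<epsilon> + diam X d + 1)"
  shows "\<exists>s>0. \<exists>f. f ` X \<subseteq> kSets k \<and>
           (\<forall>x\<in>X. \<forall>y\<in>X. s * d x y \<le> real (dI k (f x) (f y)) \<and>
                           real (dI k (f x) (f y)) \<le> (s / (1 - \<epsilon>)) * d x y)"
proof -
  have sep: "0 < sep X d" using sep_pos assms(1-4) by blast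
  have "X \<noteq> {}" using assms(2,3) by auto
  then have "0 \<le> diam X d" using diam_nonneg assms(1,4) by blast
  define c where "c = 1 / (\<epsilon> * sep X d)"
  have "0 < c" using sep assms(5) by (simp add: c_def)
  define V where "V = nat \<lceil>c * diam X d\<rceil>"
  have "(real n + 3/2) * (c * diam X d + diam X d + 1) \<le> real k"
    using assms(7) by (simp add: c_def mult.commute)
  with \<open>0 < c\<close> \<open>0 \<le> diam X d\<close> have "(n + 1) * V \<le> k" "0 < k"
    unfolding V_def using mult_nat_ceiling_le[of "c * diam X d" "diam X d" n k] by simp_all
  moreover have "\<forall>x\<in>X. \<forall>y\<in>X. c * d x y \<le> real V"
    using dist_le_diam[OF assms(1)] \<open>0 < c\<close> unfolding V_def
    by (meson mult_left_mono less_imp_le order_trans of_nat_ceiling)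
  ultimately obtain f where f: "f ` X \<subseteq> kSets k"
    "\<forall>x\<in>X. \<forall>y\<in>X. dI k (f x) (f y) = 2 * nat \<lceil>c * d x y\<rceil>"
    using interlacing_embedding_ceiling[OF assms(4,1) \<open>0 < c\<close>] assms(2) by blast
  have "2 * c * d x y \<le> real (dI k (f x) (f y)) \<and> real (dI k (f x) (f y)) \<le> 2 * c / (1 - \<epsilon>) * d x y"
    if "x \<in> X" "y \<in> X" for x y
  proof -
    have "\<epsilon> * (c * d x y) = d x y / sep X d" using assms(5) by (simp add: c_def)
    then have "c * d x y = 0 \<or> 1 \<le> \<epsilon> * (c * d x y)"
      using dist_eq_0_or_sep_le[OF assms(1,4) that] sep by auto
    from nat_ceiling_distortion[OF assms(5,6) this] f(2) that show ?thesis by simp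
  qed
  then show ?thesis using \<open>0 < c\<close> f(1) by (intro exI[of _ "2 * c"]) auto
qed

end
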